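(* If $\mathfrak p>\aleph_1$ and $( * )$ holds, then $(\mathrm A)$ holds.
   Context: $[S]^{\le\aleph_0}$: countable subsets of $S$; $x\subseteq^*y$ iff $x\setminus y$ is finite; $\downarrow\mathcal H=\bigcup_{x\in\mathcal H}\mathcal P(x)$; a set is locally in $\mathcal K$ if all its countable subsets are in $\mathcal K$; $B$ is orthogonal to $\mathcal H$ if $B\cap x$ is finite for every $x\in\mathcal H$. $\mathfrak p$ is the least cardinality of a family $\mathcal A\subseteq[\omega]^{\aleph_0}$ with the finite intersection property (every nonempty finite subfamily has infinite intersection) with no infinite $\subseteq^*$-lower bound. $( * )$: for every ordinal $\theta$ and every $\sigma$-directed (every countable subset has an upper bound) subfamily $\mathcal H$ of $([\theta]^{\le\aleph_0},\subseteq^* )$, either there is an uncountable $X\subseteq\theta$ locally in $\downarrow\mathcal H$, or $\theta$ is a union of countably many sets orthogonal to $\mathcal H$. $(\mathrm A)$: for every set $S$ and every directed subfamily $\mathcal H$ of $([S]^{\le\aleph_0},\subseteq^* )$ with $|\mathcal H|\le\aleph_1$, either (1) $S$ has a countable decomposition into singletons and pieces locally in $\downarrow\mathcal H$, or (2) there is an uncountable subset of $S$ orthogonal to $\mathcal H$. *)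

theory Defs
  imports Main "HOL-Library.Countable_Set"
begin

definition almost_subset :: "'a set \<Rightarrow> 'a set \<Rightarrow> bool" where
  "almost_subset x y \<longleftrightarrow> finite (x - y)"

definition down :: "'a set set \<Rightarrow> 'a set set" where
  "down H = (\<Union>x\<in>H. Pow x)"

definition locally_in :: "'a set \<Rightarrow> 'a set set \<Rightarrow> bool" where
  "locally_in X K \<longleftrightarrow> (\<forall>y. y \<subseteq> X \<and> countable y \<longrightarrow> y \<in> K)"

definition orthogonal :: "'a set \<Rightarrow> 'a set set \<Rightarrow> bool" where
  "orthogonal B H \<longleftrightarrow> (\<forall>x\<in>H. finite (B \<inter> x))"

definition countable_subsets_family :: "'a set \<Rightarrow> 'a set set \<Rightarrow> bool" where
  "countable_subsets_family S H \<longleftrightarrow> (\<forall>x\<in>H. x \<subseteq> S \<and> countable x)"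

definition directed_ae :: "'a set set \<Rightarrow> bool" where
  "directed_ae H \<longleftrightarrow>
     (\<forall>C. C \<subseteq> H \<and> finite C \<longrightarrow> (\<exists>u\<in>H. \<forall>c\<in>C. almost_subset c u))"

definition sigma_directed_ae :: "'a set set \<Rightarrow> bool" where
  "sigma_directed_ae H \<longleftrightarrow>
     (\<forall>C. C \<subseteq> H \<and> countable C \<longrightarrow> (\<exists>u\<in>H. \<forall>c\<in>C. almost_subset c u))"

text \<open>The cardinal invariant p is greater than aleph_1: every family of at most
  aleph_1 infinite subsets of omega with the strong finite intersection property
  has an infinite pseudo-intersection (an infinite almost-lower bound).\<close>
definition p_gt_aleph1 :: bool where
  "p_gt_aleph1 \<longleftrightarrow>
     (\<forall>A :: nat set set.
        (\<forall>a\<in>A. infinite a)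
        \<and> (\<forall>F. F \<subseteq> A \<and> finite F \<and> F \<noteq> {} \<longrightarrow> infinite (\<Inter>F))
        \<and> ordLeq2 (card_of A) (cardSuc natLeq)
        \<longrightarrow> (\<exists>B. infinite B \<and> (\<forall>a\<in>A. almost_subset B a)))"

text \<open>Principle (*), for all "ordinals" theta, represented as sets of elements of type 'a.\<close>
definition star_principle :: "'a itself \<Rightarrow> bool" where
  "star_principle _ \<longleftrightarrow>
     (\<forall>(\<theta>::'a set) (H::'a set set).
        countable_subsets_family \<theta> H \<and> sigma_directed_ae H \<longrightarrow>
          (\<exists>X. X \<subseteq> \<theta> \<and> uncountable X \<and> locally_in X (down H))
          \<or> (\<exists>P::'a set set. countable P \<and> \<Union>P = \<theta> \<and> (\<forall>B\<in>P. orthogonal B H)))"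

definition principle_A :: "'a itself \<Rightarrow> bool" where
  "principle_A _ \<longleftrightarrow>
     (\<forall>(S::'a set) (H::'a set set).
        countable_subsets_family S H \<and> directed_ae H
        \<and> ordLeq2 (card_of H) (cardSuc natLeq) \<longrightarrow>
          (\<exists>P::'a set set. countable P \<and> \<Union>P = S \<and> pairwise disjnt P
              \<and> (\<forall>B\<in>P. (\<exists>s. B = {s}) \<or> locally_in B (down H)))
          \<or> (\<exists>X. X \<subseteq> S \<and> uncountable X \<and> orthogonal X H))"

end

theory Submission
  imports Defs "HOL-Library.Disjoint_Sets"
begin

text \<open>Since \<open>p > \<aleph>\<^sub>1\<close>, every family of at most \<open>\<aleph>\<^sub>1\<close> functions \<open>\<omega> \<rightarrow> \<omega>\<close> is
  eventually dominated by a single one; this makes the family \<open>\<O>\<close> of countable subsets of \<open>S\<close>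
  orthogonal to \<open>H\<close> \<open>\<sigma>\<close>-directed, so \<open>(*)\<close> applies to \<open>\<O>\<close>. An uncountable set locally
  in \<open>\<down>\<O>\<close> is orthogonal to \<open>H\<close>. Otherwise \<open>S\<close> is a countable union of sets \<open>B\<close>
  orthogonal to \<open>\<O>\<close>. Every countable \<open>z \<subseteq> B\<close> is then almost contained in a member of \<open>H\<close>:
  if not, the sets \<open>z - h\<close> have the strong finite intersection property because \<open>H\<close> is
  directed, and a pseudo-intersection of them is an infinite member of \<open>\<O>\<close> inside \<open>B\<close>.
  A closure argument over the finite subsets of \<open>B\<close> upgrades this to: \<open>B\<close> minus a finite set
  is locally in \<open>\<down>H\<close>. The countably many exceptional points become singletons, and the rest
  is made disjoint.\<close>

unbundle cardinal_syntax

lemma p_gt_aleph1_pseudo_intersection: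
  assumes p: p_gt_aleph1
    and Z: "countable Z" "infinite Z"
    and card: "|A| \<le>o cardSuc natLeq"
    and sfip: "\<And>F. F \<subseteq> A \<Longrightarrow> finite F \<Longrightarrow> infinite (Z \<inter> \<Inter>F)"
  shows "\<exists>W\<subseteq>Z. infinite W \<and> (\<forall>a\<in>A. almost_subset W a)"
proof -
  define f where "f = to_nat_on Z"
  have "bij_betw f Z UNIV"
    unfolding f_def using to_nat_on_infinite Z by blast
  then have inj: "inj_on f Z" and surj: "f ` Z = UNIV"
    by (auto dest: bij_betw_imp_inj_on bij_betw_imp_surj_on)
  define A' where "A' = (\<lambda>a. f ` (Z \<inter> a)) ` A"
  have sfip': "infinite (\<Inter>F')" if "F' \<subseteq> A'" "finite F'" for F'
  proof -
    obtain F where F: "F \<subseteq> A" "finite F" "F' = (\<lambda>a. f ` (Z \<inter> a)) ` F"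
      using finite_subset_image[OF \<open>finite F'\<close> \<open>F' \<subseteq> A'\<close>[unfolded A'_def]] by blast
    have "f ` (Z \<inter> \<Inter>F) \<subseteq> \<Inter>F'"
      using F(3) by auto
    moreover have "infinite (f ` (Z \<inter> \<Inter>F))"
      using sfip[OF F(1,2)] finite_imageD inj_on_subset[OF inj] by blast
    ultimately show ?thesis
      using finite_subset by blast
  qed
  have "\<forall>a\<in>A'. infinite a"
    using sfip'[of "{_}"] by auto
  moreover have "|A'| \<le>o cardSuc natLeq"
    unfolding A'_def using ordLeq_transitive[OF card_of_image card] .
  ultimately obtain B where B: "infinite B" "\<forall>a\<in>A'. almost_subset B a"
    using p sfip' unfolding p_gt_aleph1_def by (elim allE[of _ A']) auto
  define W where "W = {x \<in> Z. f x \<in> B}"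
  have "f ` W = B"
    unfolding W_def using surj by auto
  then have "infinite W"
    using B(1) by auto
  moreover have "almost_subset W a" if "a \<in> A" for a
  proof -
    have "f ` (W - a) \<subseteq> B - f ` (Z \<inter> a)"
      unfolding W_def using inj by (auto simp: inj_on_def)
    moreover have "finite (B - f ` (Z \<inter> a))"
      using B(2) that unfolding A'_def almost_subset_def by auto
    ultimately have "finite (f ` (W - a))"
      using finite_subset by blast
    moreover have "inj_on f (W - a)"
      by (rule inj_on_subset[OF inj]) (auto simp: W_def)
    ultimately show ?thesis
      unfolding almost_subset_def by (rule finite_imageD)
  qed
  moreover have "W \<subseteq> Z"
    unfolding W_def by blast
  ultimately show ?thesis
    by blast
qed

definition above_running_max :: "(nat \<Rightarrow> nat) \<Rightarrow> (nat \<times> nat) set" where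
  "above_running_max f = {(k, m). \<forall>i\<le>k. f i \<le> m}"

definition right_of :: "nat \<Rightarrow> (nat \<times> nat) set" where
  "right_of k = {(k', m). k \<le> k'}"

lemma infinite_Inter_above_running_max_right_of:
  assumes "finite G" "G \<subseteq> range above_running_max \<union> range right_of"
  shows "infinite (\<Inter>G)"
proof -
  have "\<exists>K0. \<forall>K\<ge>K0. \<exists>M. \<forall>m\<ge>M. (K, m) \<in> \<Inter>G"
    using assms
  proof (induction G rule: finite_induct)
    case empty
    then show ?case by auto
  next
    case (insert a G)
    then obtain K0 where K0: "\<forall>K\<ge>K0. \<exists>M. \<forall>m\<ge>M. (K, m) \<in> \<Inter>G"
      by auto
    from insert.prems consider f where "a = above_running_max f" | k where "a = right_of k"
      by auto
    then show ?case
    proof cases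
      case 1
      have "\<exists>M. \<forall>m\<ge>M. (K, m) \<in> \<Inter>(insert a G)" if K: "K0 \<le> K" for K
      proof -
        obtain M where "\<forall>m\<ge>M. (K, m) \<in> \<Inter>G"
          using K0 K by auto
        then have "\<forall>m\<ge>max M (Max (f ` {..K})). (K, m) \<in> \<Inter>(insert a G)"
          using 1 by (auto simp: above_running_max_def)
        then show ?thesis ..
      qed
      then show ?thesis by blast
    next
      case 2
      have "\<exists>M. \<forall>m\<ge>M. (K, m) \<in> \<Inter>(insert a G)" if "max K0 k \<le> K" for K
        using K0 that 2 by (auto simp: right_of_def)
      then show ?thesis by blast
    qed
  qed
  then obtain K M where "\<forall>m\<ge>M. (K, m) \<in> \<Inter>G"
    by (metis order_refl)
  then have "Pair K ` {M..} \<subseteq> \<Inter>G"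
    by auto
  moreover have "infinite (Pair K ` {M..})"
    using finite_imageD[of "Pair K" "{M..}"] infinite_Ici[of M] by (auto simp: inj_on_def)
  ultimately show ?thesis
    using finite_subset by auto
qed

lemma eventually_dominated_if_pseudo_intersection:
  assumes B: "infinite B" "\<And>k. almost_subset B (right_of k)"
  shows "\<exists>g. \<forall>f. almost_subset B (above_running_max f) \<longrightarrow> (\<exists>N. \<forall>n\<ge>N. f n \<le> g n)"
proof -
  have "\<exists>x\<in>B. n \<le> fst x" for n
  proof -
    have "B \<inter> right_of n \<noteq> {}"
      using B(1) B(2)[of n] Diff_triv[of B "right_of n"] unfolding almost_subset_def by auto
    then show ?thesis
      by (force simp: right_of_def)
  qed
  \<comment> \<open>The heights of points of \<open>B\<close> at or beyond column \<open>n\<close> give the dominating function.\<close>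
  then obtain pt where pt: "\<And>n. pt n \<in> B \<and> n \<le> fst (pt n)"
    by metis
  have "\<exists>N. \<forall>n\<ge>N. f n \<le> snd (pt n)" if "almost_subset B (above_running_max f)" for f
  proof -
    have "finite (fst ` (B - above_running_max f))"
      using that unfolding almost_subset_def by simp
    then obtain N where N: "fst ` (B - above_running_max f) \<subseteq> {..<N}"
      using finite_nat_bounded by blast
    have "f n \<le> snd (pt n)" if "N \<le> n" for n
    proof -
      have "pt n \<in> above_running_max f"
        using N pt[of n] that by fastforce
      then show ?thesis
        using pt[of n] by (cases "pt n") (auto simp: above_running_max_def)
    qed
    then show ?thesis by blast
  qed
  then show ?thesis
    by (intro exI[of _ "snd \<circ> pt"]) simp
qed

lemma p_gt_aleph1_dominating_function:
  assumes p: p_gt_aleph1 and F: "|F| \<le>o cardSuc natLeq"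
  shows "\<exists>g::nat \<Rightarrow> nat. \<forall>f\<in>F. \<exists>N. \<forall>n\<ge>N. f n \<le> g n"
proof -
  define A where "A = above_running_max ` F \<union> range right_of"
  have card: "|A| \<le>o cardSuc natLeq"
  proof -
    have "|above_running_max ` F| \<le>o cardSuc natLeq"
      using ordLeq_transitive[OF card_of_image F] .
    moreover have "|range right_of| \<le>o natLeq"
      using ordLeq_ordIso_trans[OF card_of_image card_of_nat] .
    then have "|range right_of| \<le>o cardSuc natLeq"
      using ordLeq_transitive[OF _ cardSuc_ordLeq[OF natLeq_Card_order]] by blast
    moreover have "Cinfinite (cardSuc natLeq)"
      by (simp add: Cinfinite_cardSuc natLeq_cinfinite natLeq_Card_order)
    ultimately show ?thesis
      unfolding A_def by (rule Un_Cinfinite_bound)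
  qed
  have "countable (UNIV :: (nat \<times> nat) set)" "infinite (UNIV :: (nat \<times> nat) set)"
    by (simp_all add: finite_prod)
  then have "\<exists>B\<subseteq>UNIV. infinite B \<and> (\<forall>a\<in>A. almost_subset B a)"
  proof (rule p_gt_aleph1_pseudo_intersection[OF p _ _ card])
    fix G assume G: "G \<subseteq> A" "finite G"
    then have "G \<subseteq> range above_running_max \<union> range right_of"
      unfolding A_def by blast
    with G(2) have "infinite (\<Inter>G)"
      by (rule infinite_Inter_above_running_max_right_of)
    then show "infinite (UNIV \<inter> \<Inter>G)"
      by simp
  qed
  then obtain B where B: "infinite B" "\<forall>a\<in>A. almost_subset B a"
    by blast
  have "almost_subset B (right_of k)" for k
    using B(2) unfolding A_def by blast
  from eventually_dominated_if_pseudo_intersection[OF B(1) this]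
  obtain g where g: "\<forall>f. almost_subset B (above_running_max f) \<longrightarrow> (\<exists>N. \<forall>n\<ge>N. f n \<le> g n)"
    by blast
  have "almost_subset B (above_running_max f)" if "f \<in> F" for f
    using B(2) that unfolding A_def by blast
  then show ?thesis
    using g by blast
qed

lemma orthogonal_almost_upper_bound:
  fixes c :: "nat \<Rightarrow> 'a set"
  assumes p: p_gt_aleph1 and card: "|H| \<le>o cardSuc natLeq"
    and c: "\<And>n. countable (c n)" "\<And>n. orthogonal (c n) H"
  shows "\<exists>u\<subseteq>(\<Union>n. c n). orthogonal u H \<and> (\<forall>n. almost_subset (c n) u)"
proof -
  define Y where "Y = (\<Union>n. c n)"
  define \<iota> where "\<iota> = to_nat_on Y"
  have "countable Y"
    unfolding Y_def using c(1) by blast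
  then have inj: "inj_on \<iota> Y"
    unfolding \<iota>_def by (rule inj_on_to_nat_on)
  have fin: "finite (h \<inter> c n)" if "h \<in> H" for h n
    using c(2)[of n] that unfolding orthogonal_def by (simp add: Int_commute)
  define bound where "bound h n = Suc (Max (\<iota> ` (h \<inter> c n)))" for h n
  have bound: "\<iota> x < bound h n" if "h \<in> H" "x \<in> h \<inter> c n" for h n x
    unfolding bound_def using fin[OF that(1)] that(2) by (simp add: le_imp_less_Suc)
  obtain g where g: "\<forall>f\<in>bound ` H. \<exists>N. \<forall>n\<ge>N. f n \<le> g n"
    using p_gt_aleph1_dominating_function[OF p ordLeq_transitive[OF card_of_image card]] by blast
  \<comment> \<open>Since \<open>g\<close> eventually dominates \<open>bound h\<close>, the set \<open>u\<close> meets \<open>h\<close> only inside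
    finitely many \<open>c n\<close>.\<close>
  define u where "u = (\<Union>n. {x \<in> c n. g n \<le> \<iota> x})"
  have "orthogonal u H"
    unfolding orthogonal_def
  proof
    fix h assume h: "h \<in> H"
    then obtain N where N: "\<forall>n\<ge>N. bound h n \<le> g n"
      using g by auto
    have "u \<inter> h \<subseteq> (\<Union>n<N. h \<inter> c n)"
      unfolding u_def using N bound[OF h] by (fastforce simp: not_less[symmetric])
    moreover have "finite (\<Union>n<N. h \<inter> c n)"
      using fin[OF h] by blast
    ultimately show "finite (u \<inter> h)"
      by (rule finite_subset)
  qed
  moreover have "almost_subset (c n) u" for n
  proof -
    have "c n - u \<subseteq> \<iota> -` {..<g n} \<inter> Y"
      unfolding u_def Y_def by auto
    moreover have "finite (\<iota> -` {..<g n} \<inter> Y)"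
      using finite_vimage_IntI[OF _ inj] by blast
    ultimately show ?thesis
      unfolding almost_subset_def by (rule finite_subset)
  qed
  moreover have "u \<subseteq> Y"
    unfolding u_def Y_def by blast
  ultimately show ?thesis
    unfolding Y_def by blast
qed

definition countable_orthogonals :: "'a set \<Rightarrow> 'a set set \<Rightarrow> 'a set set" where
  "countable_orthogonals S H = {y. y \<subseteq> S \<and> countable y \<and> orthogonal y H}"

lemma sigma_directed_countable_orthogonals:
  assumes p: p_gt_aleph1 and card: "|H| \<le>o cardSuc natLeq"
  shows "sigma_directed_ae (countable_orthogonals S H)"
  unfolding sigma_directed_ae_def countable_orthogonals_def
proof (intro allI impI)
  fix C assume C: "C \<subseteq> {y. y \<subseteq> S \<and> countable y \<and> orthogonal y H} \<and> countable C"
  show "\<exists>u\<in>{y. y \<subseteq> S \<and> countable y \<and> orthogonal y H}. \<forall>c\<in>C. almost_subset c u"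
  proof (cases "C = {}")
    case True
    then show ?thesis
      by (intro bexI[of _ "{}"]) (auto simp: orthogonal_def)
  next
    case False
    have CS: "y \<subseteq> S" "countable y" "orthogonal y H" if "y \<in> C" for y
      using C that by blast+
    define c where "c = from_nat_into C"
    have range_c: "range c = C"
      unfolding c_def using False C by simp
    then have cC: "c n \<in> C" for n
      by blast
    obtain u where u: "u \<subseteq> (\<Union>n. c n)" "orthogonal u H" "\<forall>n. almost_subset (c n) u"
      using orthogonal_almost_upper_bound[where c = c, OF p card CS(2,3)[OF cC]] by blast
    have "u \<subseteq> S"
      using u(1) CS(1)[OF cC] by blast
    moreover have "countable (\<Union>n. c n)"
      using CS(2)[OF cC] by blast
    then have "countable u"
      using u(1) countable_subset by blast
    moreover have "almost_subset d u" if "d \<in> C" for d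
      using u(3) that range_c by (metis imageE)
    ultimately show ?thesis
      using u(2) by blast
  qed
qed

lemma infinite_orthogonal_subset:
  assumes p: p_gt_aleph1 and directed: "directed_ae H" and card: "|H| \<le>o cardSuc natLeq"
    and z: "countable z" "\<forall>h\<in>H. \<not> almost_subset z h"
  shows "\<exists>w\<subseteq>z. infinite w \<and> orthogonal w H"
proof -
  have upper: "\<exists>u\<in>H. \<forall>h\<in>K. almost_subset h u" if "K \<subseteq> H" "finite K" for K
    using directed that unfolding directed_ae_def by blast
  have sfip: "infinite (z \<inter> \<Inter>F)" if F: "F \<subseteq> (\<lambda>h. z - h) ` H" "finite F" for F
  proof -
    obtain K where K: "K \<subseteq> H" "finite K" "F = (\<lambda>h. z - h) ` K"
      using finite_subset_image[OF F(2,1)] by blast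
    obtain u where u: "u \<in> H" "\<forall>h\<in>K. almost_subset h u"
      using upper[OF K(1,2)] by blast
    have "finite (\<Union>h\<in>K. h - u)"
      using u(2) K(2) unfolding almost_subset_def by (intro finite_UN_I) auto
    moreover have "infinite (z - u)"
      using z(2) u(1) unfolding almost_subset_def by blast
    ultimately have "infinite ((z - u) - (\<Union>h\<in>K. h - u))"
      by simp
    moreover have "(z - u) - (\<Union>h\<in>K. h - u) \<subseteq> z \<inter> \<Inter>F"
      using K(3) by blast
    ultimately show ?thesis
      using finite_subset by blast
  qed
  have "infinite z"
    using sfip[of "{}"] by simp
  moreover have "|(\<lambda>h. z - h) ` H| \<le>o cardSuc natLeq"
    using ordLeq_transitive[OF card_of_image card] .
  ultimately have "\<exists>w\<subseteq>z. infinite w \<and> (\<forall>a\<in>(\<lambda>h. z - h) ` H. almost_subset w a)"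
    by (rule p_gt_aleph1_pseudo_intersection[OF p z(1)]) (rule sfip)
  then obtain w where w: "w \<subseteq> z" "infinite w" "\<forall>h\<in>H. almost_subset w (z - h)"
    by auto
  have "orthogonal w H"
    unfolding orthogonal_def
  proof
    fix h assume "h \<in> H"
    then have "finite (w - (z - h))"
      using w(3) unfolding almost_subset_def by blast
    moreover have "w \<inter> h \<subseteq> w - (z - h)"
      by blast
    ultimately show "finite (w \<inter> h)"
      using finite_subset by blast
  qed
  then show ?thesis
    using w by blast
qed

lemma countable_closure_finite_subsets:
  assumes Z: "\<And>e. finite e \<Longrightarrow> e \<subseteq> B \<Longrightarrow> Z e \<subseteq> B \<and> countable (Z e)"
  shows "\<exists>M\<subseteq>B. countable M \<and> (\<forall>e. finite e \<and> e \<subseteq> M \<longrightarrow> Z e \<subseteq> M)"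
proof -
  define M where "M = rec_nat {} (\<lambda>_ Mn. Mn \<union> \<Union>(Z ` {e. finite e \<and> e \<subseteq> Mn}))"
  have M_Suc: "M (Suc n) = M n \<union> \<Union>(Z ` {e. finite e \<and> e \<subseteq> M n})" for n
    unfolding M_def by simp
  have M: "M n \<subseteq> B \<and> countable (M n)" for n
  proof (induction n)
    case 0
    then show ?case by (simp add: M_def)
  next
    case (Suc n)
    then have "countable {e. finite e \<and> e \<subseteq> M n}"
      using countable_Collect_finite_subset by blast
    with Suc show ?case
      unfolding M_Suc using Z by (intro conjI countable_Un countable_UN) auto
  qed
  have M_mono: "M m \<subseteq> M n" if "m \<le> n" for m n
    using lift_Suc_mono_le[of M, OF _ that] by (simp add: M_Suc)
  have cover: "\<exists>n. e \<subseteq> M n" if "finite e" "e \<subseteq> (\<Union>n. M n)" for e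
    using that
  proof (induction e rule: finite_induct)
    case empty
    then show ?case by blast
  next
    case (insert x e)
    then obtain n k where "e \<subseteq> M n" "x \<in> M k"
      by blast
    then have "insert x e \<subseteq> M (max n k)"
      using M_mono[of n "max n k"] M_mono[of k "max n k"] by auto
    then show ?case ..
  qed
  have closed: "Z e \<subseteq> (\<Union>n. M n)" if e: "finite e" "e \<subseteq> (\<Union>n. M n)" for e
  proof -
    obtain n where "e \<subseteq> M n"
      using cover[OF e] ..
    then have "Z e \<subseteq> M (Suc n)"
      using e(1) unfolding M_Suc by blast
    then show ?thesis
      by blast
  qed
  have "(\<Union>n. M n) \<subseteq> B" "countable (\<Union>n. M n)"
    using M by auto
  with closed show ?thesis
    by (intro exI[of _ "\<Union>n. M n"]) auto
qed

lemma locally_in_mono: "locally_in X K \<Longrightarrow> Y \<subseteq> X \<Longrightarrow> locally_in Y K"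
  unfolding locally_in_def by blast

lemma locally_in_down_Diff_finite:
  assumes cover: "\<And>z. z \<subseteq> B \<Longrightarrow> countable z \<Longrightarrow> \<exists>h\<in>H. almost_subset z h"
  shows "\<exists>e. finite e \<and> locally_in (B - e) (down H)"
proof (rule ccontr)
  assume none: "\<not> ?thesis"
  define Z where "Z e = (SOME y. y \<subseteq> B - e \<and> countable y \<and> y \<notin> down H)" for e
  have Z: "Z e \<subseteq> B - e \<and> countable (Z e) \<and> Z e \<notin> down H" if "finite e" for e
  proof -
    have "\<exists>y. y \<subseteq> B - e \<and> countable y \<and> y \<notin> down H"
      using none that unfolding locally_in_def by blast
    then show ?thesis
      unfolding Z_def by (rule someI_ex)
  qed
  have "\<exists>M\<subseteq>B. countable M \<and> (\<forall>e. finite e \<and> e \<subseteq> M \<longrightarrow> Z e \<subseteq> M)"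
    by (rule countable_closure_finite_subsets) (use Z in blast)
  then obtain M where M: "M \<subseteq> B" "countable M" "\<forall>e. finite e \<and> e \<subseteq> M \<longrightarrow> Z e \<subseteq> M"
    by blast
  obtain h where h: "h \<in> H" "almost_subset M h"
    using cover[OF M(1,2)] by blast
  define e where "e = M - h"
  have e: "finite e"
    using h(2) unfolding e_def almost_subset_def .
  \<comment> \<open>\<open>Z e\<close> lies in \<open>M\<close> but avoids the finitely many points of \<open>M\<close> outside \<open>h\<close>.\<close>
  have "Z e \<subseteq> M"
    using M(3) e unfolding e_def by blast
  moreover have "Z e \<inter> e = {}"
    using Z[OF e] by blast
  ultimately have "Z e \<subseteq> h"
    unfolding e_def by blast
  then have "Z e \<in> down H"
    using h(1) unfolding down_def by blast
  then show False
    using Z[OF e] by blast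
qed

lemma locally_in_down_Diff_finite_if_orthogonal:
  assumes p: p_gt_aleph1 and directed: "directed_ae H" and card: "|H| \<le>o cardSuc natLeq"
    and B: "B \<subseteq> S" "orthogonal B (countable_orthogonals S H)"
  shows "\<exists>e. finite e \<and> locally_in (B - e) (down H)"
proof (rule locally_in_down_Diff_finite)
  fix z assume z: "z \<subseteq> B" "countable z"
  show "\<exists>h\<in>H. almost_subset z h"
  proof (rule ccontr)
    assume "\<not> ?thesis"
    then obtain w where w: "w \<subseteq> z" "infinite w" "orthogonal w H"
      using infinite_orthogonal_subset[OF p directed card z(2)] by blast
    have "w \<subseteq> S"
      using w(1) z(1) B(1) by blast
    moreover have "countable w"
      using countable_subset[OF w(1) z(2)] .
    ultimately have "finite (B \<inter> w)"
      using B(2) w(3) unfolding orthogonal_def countable_orthogonals_def by blast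
    moreover have "B \<inter> w = w"
      using w(1) z(1) by blast
    ultimately show False
      using w(2) by simp
  qed
qed

lemma orthogonal_if_locally_in_down:
  assumes "locally_in X (down G)" "\<forall>y\<in>G. orthogonal y H" "\<forall>h\<in>H. countable h"
  shows "orthogonal X H"
  unfolding orthogonal_def
proof
  fix h assume h: "h \<in> H"
  then have "X \<inter> h \<in> down G"
    using assms(1,3) unfolding locally_in_def by (meson Int_lower1 countable_subset inf_le2)
  then obtain y where "y \<in> G" "X \<inter> h \<subseteq> y"
    unfolding down_def by blast
  moreover have "finite (y \<inter> h)"
    using \<open>y \<in> G\<close> h assms(2) unfolding orthogonal_def by blast
  ultimately have "X \<inter> h \<subseteq> y \<inter> h" "finite (y \<inter> h)"
    by blast+
  then show "finite (X \<inter> h)"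
    by (rule finite_subset)
qed

lemma pairwise_disjnt_singletons_Un_disjointed:
  assumes "\<And>n. disjointed A n \<inter> E = {}"
  shows "pairwise disjnt ((\<lambda>s. {s}) ` E \<union> range (disjointed A))"
proof (rule pairwiseI)
  have DE: "x \<notin> E" if "x \<in> disjointed A n" for x n
    using assms[of n] that by blast
  have DD: "m = n" if "x \<in> disjointed A m" "x \<in> disjointed A n" for x m n
    using disjoint_family_disjointed[of A] that unfolding disjoint_family_on_def by blast
  fix X Y
  assume "X \<in> (\<lambda>s. {s}) ` E \<union> range (disjointed A)" "Y \<in> (\<lambda>s. {s}) ` E \<union> range (disjointed A)"
    and "X \<noteq> Y"
  then show "disjnt X Y"
    unfolding disjnt_def by (auto dest: DE DD)
qed

lemma disjoint_refinement_singletons_locally_in: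
  assumes P: "countable P" "\<Union>P = S"
    and cofinite: "\<And>B. B \<in> P \<Longrightarrow> \<exists>e. finite e \<and> locally_in (B - e) K"
  shows "\<exists>P'. countable P' \<and> \<Union>P' = S \<and> pairwise disjnt P'
    \<and> (\<forall>B\<in>P'. (\<exists>s. B = {s}) \<or> locally_in B K)"
proof (cases "P = {}")
  case True
  then show ?thesis
    using P(2) by (intro exI[of _ "{}"]) auto
next
  case False
  define e where "e B = (SOME e. finite e \<and> locally_in (B - e) K)" for B
  have e: "finite (e B)" "locally_in (B - e B) K" if "B \<in> P" for B
    using someI_ex[OF cofinite[OF that]] unfolding e_def by blast+
  define E where "E = \<Union>(e ` P)"
  define A where "A n = from_nat_into P n - E" for n
  define P' where "P' = (\<lambda>s. {s}) ` (S \<inter> E) \<union> range (disjointed A)"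
  have in_P: "from_nat_into P n \<in> P" for n
    using False by (rule from_nat_into)
  have disjoint_E: "disjointed A n \<inter> (S \<inter> E) = {}" for n
    using disjointed_subset[of A n] unfolding A_def by blast
  have "countable E"
    unfolding E_def using P(1) e(1) by (simp add: countable_finite)
  then have "countable P'"
    unfolding P'_def by simp
  moreover have "\<Union>P' = S"
  proof -
    have "(\<Union>n. from_nat_into P n) = \<Union>P"
      using False P(1) by simp
    then have "(\<Union>n. disjointed A n) = S - E"
      unfolding UN_disjointed_eq A_def using P(2) by blast
    then show ?thesis
      unfolding P'_def by blast
  qed
  moreover have "pairwise disjnt P'"
    unfolding P'_def by (rule pairwise_disjnt_singletons_Un_disjointed[OF disjoint_E])
  moreover have "\<forall>B\<in>P'. (\<exists>s. B = {s}) \<or> locally_in B K"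
  proof -
    have "locally_in (disjointed A n) K" for n
    proof -
      have "e (from_nat_into P n) \<subseteq> E"
        unfolding E_def using in_P by blast
      then have "disjointed A n \<subseteq> from_nat_into P n - e (from_nat_into P n)"
        using disjointed_subset[of A n] unfolding A_def by blast
      then show ?thesis
        by (rule locally_in_mono[OF e(2)[OF in_P]])
    qed
    then show ?thesis
      unfolding P'_def by blast
  qed
  ultimately show ?thesis
    by blast
qed

theorem corollary5p1:
  assumes "p_gt_aleph1"
    and "star_principle TYPE('a)"
  shows "principle_A TYPE('a)"
  unfolding principle_A_def
proof (intro allI impI, goal_cases)
  case (1 S H)
  then have H: "\<forall>h\<in>H. countable h" and directed: "directed_ae H" and card: "|H| \<le>o cardSuc natLeq"
    unfolding countable_subsets_family_def by auto
  define Orth where "Orth = countable_orthogonals S H"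
  have "countable_subsets_family S Orth"
    unfolding Orth_def countable_subsets_family_def countable_orthogonals_def by blast
  moreover have "sigma_directed_ae Orth"
    unfolding Orth_def by (rule sigma_directed_countable_orthogonals[OF assms(1) card])
  ultimately consider X where "X \<subseteq> S" "uncountable X" "locally_in X (down Orth)"
    | P where "countable P" "\<Union>P = S" "\<forall>B\<in>P. orthogonal B Orth"
    using assms(2)[unfolded star_principle_def, rule_format, of S Orth] by blast
  then show ?case
  proof cases
    case (1 X)
    have "\<forall>y\<in>Orth. orthogonal y H"
      unfolding Orth_def countable_orthogonals_def by blast
    then have "orthogonal X H"
      using orthogonal_if_locally_in_down[OF 1(3) _ H] by blast
    then show ?thesis
      using 1 by blast
  next
    case (2 P)
    have "\<exists>e. finite e \<and> locally_in (B - e) (down H)" if "B \<in> P" for B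
    proof (rule locally_in_down_Diff_finite_if_orthogonal[OF assms(1) directed card])
      show "B \<subseteq> S" "orthogonal B (countable_orthogonals S H)"
        using 2(2,3) that unfolding Orth_def by blast+
    qed
    from disjoint_refinement_singletons_locally_in[OF 2(1,2) this]
    show ?thesis ..
  qed
qed

end
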